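(* For every $q\ge2$, $\mathfrak{Z}^+(K_{2,q})$ is unique: if $G$ is a graph with no isolated vertices and $\mathfrak{Z}^+(G)\cong\mathfrak{Z}^+(K_{2,q})$, then $G\cong K_{2,q}$.
   Context: All graphs are finite, simple, undirected. PSD color change rule: with $B$ the set of blue vertices and $W=V(G)\setminus B$ the white vertices, let $W_1,\dots,W_k$ be the vertex sets of the connected components of $G[W]$; if $u\in B$, $w\in W_i$, and $w$ is the only white neighbor of $u$ in $G[W_i\cup B]$, then $u$ may color $w$ blue. $S$ is a PSD forcing set if starting with exactly $S$ blue and applying the rule repeatedly, all vertices become blue. The PSD TAR graph $\mathfrak{Z}^+(G)$ has as vertices the PSD forcing sets of $G$, with $S_1S_2$ an edge iff $|S_1\ominus S_2|=1$ (symmetric difference). $K_{2,q}$ is the complete bipartite graph with parts of sizes $2$ and $q$. *)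

theory Defs
  imports Main
begin

definition simple_graph :: "'a set \<Rightarrow> ('a \<Rightarrow> 'a \<Rightarrow> bool) \<Rightarrow> bool" where
  "simple_graph V E \<longleftrightarrow> finite V \<and> (\<forall>x y. E x y \<longrightarrow> x \<in> V \<and> y \<in> V)
     \<and> (\<forall>x y. E x y \<longrightarrow> E y x) \<and> (\<forall>x. \<not> E x x)"

definition no_isolated :: "'a set \<Rightarrow> ('a \<Rightarrow> 'a \<Rightarrow> bool) \<Rightarrow> bool" where
  "no_isolated V E \<longleftrightarrow> (\<forall>v\<in>V. \<exists>u\<in>V. E v u)"

definition graph_iso :: "'a set \<Rightarrow> ('a \<Rightarrow> 'a \<Rightarrow> bool) \<Rightarrow> 'b set \<Rightarrow> ('b \<Rightarrow> 'b \<Rightarrow> bool) \<Rightarrow> bool" where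
  "graph_iso V1 E1 V2 E2 \<longleftrightarrow>
     (\<exists>f. bij_betw f V1 V2 \<and> (\<forall>x\<in>V1. \<forall>y\<in>V1. E1 x y \<longleftrightarrow> E2 (f x) (f y)))"

definition white_comp :: "'a set \<Rightarrow> ('a \<Rightarrow> 'a \<Rightarrow> bool) \<Rightarrow> 'a set \<Rightarrow> 'a \<Rightarrow> 'a set" where
  "white_comp V E B w =
     {x. (\<lambda>a b. a \<in> V - B \<and> b \<in> V - B \<and> E a b)\<^sup>*\<^sup>* w x}"

definition psd_force :: "'a set \<Rightarrow> ('a \<Rightarrow> 'a \<Rightarrow> bool) \<Rightarrow> 'a set \<Rightarrow> 'a \<Rightarrow> 'a \<Rightarrow> bool" where
  "psd_force V E B u w \<longleftrightarrow> u \<in> B \<and> w \<in> V - B \<and> E u w \<and>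
     (\<forall>x\<in>white_comp V E B w. E u x \<longrightarrow> x = w)"

definition psd_step :: "'a set \<Rightarrow> ('a \<Rightarrow> 'a \<Rightarrow> bool) \<Rightarrow> 'a set \<Rightarrow> 'a set \<Rightarrow> bool" where
  "psd_step V E B B' \<longleftrightarrow> (\<exists>u w. psd_force V E B u w \<and> B' = insert w B)"

definition psd_forcing_set :: "'a set \<Rightarrow> ('a \<Rightarrow> 'a \<Rightarrow> bool) \<Rightarrow> 'a set \<Rightarrow> bool" where
  "psd_forcing_set V E S \<longleftrightarrow> S \<subseteq> V \<and> (psd_step V E)\<^sup>*\<^sup>* S V"

definition psd_tar_V :: "'a set \<Rightarrow> ('a \<Rightarrow> 'a \<Rightarrow> bool) \<Rightarrow> 'a set set" where
  "psd_tar_V V E = {S. psd_forcing_set V E S}"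

definition psd_tar_E :: "'a set \<Rightarrow> ('a \<Rightarrow> 'a \<Rightarrow> bool) \<Rightarrow> 'a set \<Rightarrow> 'a set \<Rightarrow> bool" where
  "psd_tar_E V E S1 S2 \<longleftrightarrow> S1 \<in> psd_tar_V V E \<and> S2 \<in> psd_tar_V V E \<and>
     card ((S1 - S2) \<union> (S2 - S1)) = 1"

text \<open>K_{2,q} on vertices {0,...,q+1}: parts {0,1} and {2,...,q+1}.\<close>
definition K2q_V :: "nat \<Rightarrow> nat set" where
  "K2q_V q = {..<q+2}"

definition K2q_E :: "nat \<Rightarrow> nat \<Rightarrow> nat \<Rightarrow> bool" where
  "K2q_E q x y \<longleftrightarrow> x \<in> K2q_V q \<and> y \<in> K2q_V q \<and> ((x < 2 \<and> 2 \<le> y) \<or> (2 \<le> x \<and> y < 2))"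

end

theory Submission
  imports Defs
begin

text \<open>Supersets of PSD forcing sets are forcing, so any two forcing sets are joined in the TAR
  graph by a path of length the size of their symmetric difference, and no shorter path exists.
  A TAR isomorphism is therefore an isometry for the symmetric difference; comparing degrees
  (the full vertex set has the maximal degree |V|) it also preserves the number of vertices.
  For K_{2,q} the forcing sets are all sets except the two singletons of the small part and the
  proper subsets of the large part B. Using that every vertex of K_{2,q} lies in a forcing pair,
  the isomorphism sends V to the full vertex set and hence preserves sizes; the preimage S of B
  then has q elements and no forcing proper subset, and counting shows that the forcing sets of
  G are exactly those of K_{2,q} with parts V - S and S. An analysis of the possible forces
  finally pins down the edges of G.\<close>

lemma card_sym_diff_of_subset:
  assumes "finite B" "A \<subseteq> B"
  shows "card (sym_diff B A) = card B - card A"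
proof -
  have "sym_diff B A = B - A" using assms(2) by blast
  then show ?thesis using assms by (simp add: card_Diff_subset finite_subset)
qed

lemma subset_if_card_sym_diff:
  assumes "finite A" "finite B" "card (sym_diff A B) + card A \<le> card B"
  shows "A \<subseteq> B"
proof -
  have "card (sym_diff A B) = card (A - B) + card (B - A)"
    using assms(1,2) by (intro card_Un_disjoint) auto
  moreover have "card A = card (A \<inter> B) + card (A - B)" "card B = card (A \<inter> B) + card (B - A)"
    using card_Int_Diff[OF assms(1), of B] card_Int_Diff[OF assms(2), of A]
    by (simp_all add: Int_commute)
  ultimately have "card (A - B) = 0" using assms(3) by simp
  then show ?thesis using assms(1) by simp
qed

lemma sym_diff_Un_Diff:
  "U \<subseteq> W \<Longrightarrow> T \<subseteq> W \<Longrightarrow> sym_diff U (T \<union> (W - U)) = W - (U \<inter> T)"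
  by blast

lemma obtain_avoiding_two:
  assumes "finite S" "3 \<le> card S"
  obtains x where "x \<in> S" "x \<noteq> y" "x \<noteq> z"
proof -
  have "card {y, z} < card S" using assms(2) by (cases "y = z") simp_all
  then have "\<not> S \<subseteq> {y, z}" using card_mono[of "{y, z}" S] by auto
  then show ?thesis using that by blast
qed

section \<open>PSD forcing\<close>

lemma white_comp_antimono:
  assumes "B \<subseteq> B'"
  shows "white_comp V E B' w \<subseteq> white_comp V E B w"
proof -
  have "(\<lambda>a b. a \<in> V - B' \<and> b \<in> V - B' \<and> E a b) \<le> (\<lambda>a b. a \<in> V - B \<and> b \<in> V - B \<and> E a b)"
    using assms by auto
  then show ?thesis
    unfolding white_comp_def by (auto dest: rtranclp_mono[THEN predicate2D])
qed

lemma white_comp_refl: "w \<in> V - B \<Longrightarrow> w \<in> white_comp V E B w"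
  unfolding white_comp_def by simp

lemma white_comp_step:
  "x \<in> white_comp V E B w \<Longrightarrow> x \<in> V - B \<Longrightarrow> y \<in> V - B \<Longrightarrow> E x y \<Longrightarrow> y \<in> white_comp V E B w"
  unfolding white_comp_def by (auto intro: rtranclp.rtrancl_into_rtrancl)

lemma white_comp_subset:
  assumes "w \<in> V - B"
  shows "white_comp V E B w \<subseteq> V - B"
proof
  fix x assume "x \<in> white_comp V E B w"
  then have "(\<lambda>a b. a \<in> V - B \<and> b \<in> V - B \<and> E a b)\<^sup>*\<^sup>* w x"
    unfolding white_comp_def by simp
  then show "x \<in> V - B"
    by (induction rule: rtranclp_induct) (use assms in auto)
qed

lemma white_comp_eq_singleton:
  assumes "w \<in> V - B" "\<forall>y\<in>V - B. \<not> E w y"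
  shows "white_comp V E B w = {w}"
proof -
  have "x = w" if "(\<lambda>a b. a \<in> V - B \<and> b \<in> V - B \<and> E a b)\<^sup>*\<^sup>* w x" for x
    using that by (induction rule: rtranclp_induct) (use assms in auto)
  then show ?thesis
    unfolding white_comp_def by auto
qed

lemma white_comp_eq_if_hub:
  assumes sym: "\<forall>x y. E x y \<longrightarrow> E y x"
    and c: "c \<in> V - B" and hub: "\<forall>x\<in>V - B - {c}. E c x" and w: "w \<in> V - B"
  shows "white_comp V E B w = V - B"
proof
  show "white_comp V E B w \<subseteq> V - B" by (rule white_comp_subset[OF w])
  have "c \<in> white_comp V E B w"
  proof (cases "w = c")
    case True
    then show ?thesis using white_comp_refl[OF w] by simp
  next
    case False
    then have "E w c" using hub w sym by blast
    then show ?thesis by (rule white_comp_step[OF white_comp_refl[OF w] w c])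
  qed
  then show "V - B \<subseteq> white_comp V E B w"
    using white_comp_step[OF _ c] hub by blast
qed

lemma psd_force_mono:
  "psd_force V E B u w \<Longrightarrow> B \<subseteq> B' \<Longrightarrow> w \<notin> B' \<Longrightarrow> psd_force V E B' u w"
  unfolding psd_force_def using white_comp_antimono[of B B' V E w] by blast

lemma not_psd_force_if_two_white_neighbours:
  assumes "white_comp V E B w = V - B" "x \<in> V - B" "y \<in> V - B" "x \<noteq> y" "E u x" "E u y"
  shows "\<not> psd_force V E B u w"
  using assms unfolding psd_force_def by blast


lemma psd_forcing_set_superset:
  assumes "psd_forcing_set V E S" "S \<subseteq> T" "T \<subseteq> V"
  shows "psd_forcing_set V E T"
proof -
  have "(psd_step V E)\<^sup>*\<^sup>* S V"
    using assms(1) unfolding psd_forcing_set_def by simp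
  then have "\<forall>T. S \<subseteq> T \<longrightarrow> T \<subseteq> V \<longrightarrow> (psd_step V E)\<^sup>*\<^sup>* T V"
  proof (induction rule: converse_rtranclp_induct)
    case base
    then show ?case by auto
  next
    case (step S S')
    show ?case
    proof (intro allI impI)
      fix T assume T: "S \<subseteq> T" "T \<subseteq> V"
      obtain u w where force: "psd_force V E S u w" and S': "S' = insert w S"
        using step.hyps(1) unfolding psd_step_def by blast
      show "(psd_step V E)\<^sup>*\<^sup>* T V"
      proof (cases "w \<in> T")
        case True
        then show ?thesis using step.IH S' T by auto
      next
        case False
        then have "psd_step V E T (insert w T)"
          unfolding psd_step_def using psd_force_mono[OF force T(1)] by blast
        moreover have "w \<in> V" using force unfolding psd_force_def by simp
        then have "(psd_step V E)\<^sup>*\<^sup>* (insert w T) V" using step.IH S' T by auto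
        ultimately show ?thesis by (rule converse_rtranclp_into_rtranclp)
      qed
    qed
  qed
  then show ?thesis
    using assms(2,3) unfolding psd_forcing_set_def by blast
qed

lemma psd_force_exists:
  assumes "psd_forcing_set V E S" "S \<noteq> V"
  shows "\<exists>u w. psd_force V E S u w"
proof -
  have "(psd_step V E)\<^sup>*\<^sup>* S V"
    using assms(1) unfolding psd_forcing_set_def by simp
  then show ?thesis
    by (rule converse_rtranclpE) (use assms(2) in \<open>auto simp: psd_step_def\<close>)
qed

lemma psd_forcing_set_if_force:
  assumes "psd_force V E S u w" "psd_forcing_set V E (insert w S)"
  shows "psd_forcing_set V E S"
proof -
  have "psd_step V E S (insert w S)"
    unfolding psd_step_def using assms(1) by blast
  then show ?thesis
    using assms(2) unfolding psd_forcing_set_def by (blast intro: converse_rtranclp_into_rtranclp)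
qed

lemma not_psd_forcing_set:
  assumes "S \<subseteq> V" "S \<noteq> V"
    and "\<And>u w. u \<in> S \<Longrightarrow> w \<in> V - S \<Longrightarrow> E u w \<Longrightarrow> \<exists>x\<in>white_comp V E S w. E u x \<and> x \<noteq> w"
  shows "\<not> psd_forcing_set V E S"
proof
  assume "psd_forcing_set V E S"
  then obtain u w where "psd_force V E S u w"
    using psd_force_exists assms(2) by blast
  then show False
    using assms(3) unfolding psd_force_def by blast
qed

text \<open>When the white vertices are pairwise non-adjacent, every white component is a single
  vertex, so any blue neighbour of a white vertex may force it.\<close>
lemma psd_forcing_set_if_white_independent:
  assumes "finite V" "S \<subseteq> V"
    and "\<forall>w\<in>V - S. \<exists>u\<in>S. E u w" and "\<forall>w\<in>V - S. \<forall>w'\<in>V - S. \<not> E w w'"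
  shows "psd_forcing_set V E S"
  using assms(2-)
proof (induction "card (V - S)" arbitrary: S rule: less_induct)
  case less
  show ?case
  proof (cases "S = V")
    case True
    then show ?thesis unfolding psd_forcing_set_def by simp
  next
    case False
    then obtain w where w: "w \<in> V - S" using less.prems(1) by blast
    then obtain u where u: "u \<in> S" "E u w" using less.prems(2) by blast
    have "\<forall>y\<in>V - S. \<not> E w y" using less.prems(3) w by blast
    then have "white_comp V E S w = {w}"
      by (rule white_comp_eq_singleton[OF w])
    then have "psd_force V E S u w"
      unfolding psd_force_def using w u by blast
    moreover have "psd_forcing_set V E (insert w S)"
    proof (rule less.hyps)
      show "card (V - insert w S) < card (V - S)"
        using w assms(1) by (intro psubset_card_mono) auto
      show "insert w S \<subseteq> V" using less.prems(1) w by blast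
      show "\<forall>x\<in>V - insert w S. \<exists>u\<in>insert w S. E u x"
        using less.prems(2) by blast
      show "\<forall>x\<in>V - insert w S. \<forall>x'\<in>V - insert w S. \<not> E x x'"
        using less.prems(3) by blast
    qed
    ultimately show ?thesis by (rule psd_forcing_set_if_force)
  qed
qed

lemma psd_forcing_set_Diff_singleton:
  assumes "simple_graph V E" "no_isolated V E" "v \<in> V"
  shows "psd_forcing_set V E (V - {v})"
proof (rule psd_forcing_set_if_white_independent)
  show "finite V" using assms(1) unfolding simple_graph_def by simp
  obtain u where "u \<in> V" "E v u"
    using assms(2,3) unfolding no_isolated_def by blast
  moreover have "u \<noteq> v" "E u v"
    using \<open>E v u\<close> assms(1) unfolding simple_graph_def by metis+
  ultimately show "\<forall>w\<in>V - (V - {v}). \<exists>u\<in>V - {v}. E u w"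
    using assms(3) by blast
  have "\<not> E v v" using assms(1) unfolding simple_graph_def by simp
  then show "\<forall>w\<in>V - (V - {v}). \<forall>w'\<in>V - (V - {v}). \<not> E w w'"
    using assms(3) by blast
qed simp

section \<open>Distances in the TAR graph\<close>

lemma psd_tar_V_subset: "S \<in> psd_tar_V V E \<Longrightarrow> S \<subseteq> V"
  unfolding psd_tar_V_def psd_forcing_set_def by simp

lemma psd_tar_V_finite: "finite V \<Longrightarrow> S \<in> psd_tar_V V E \<Longrightarrow> finite S"
  by (rule rev_finite_subset[OF _ psd_tar_V_subset])

lemma psd_tar_V_top: "V \<in> psd_tar_V V E"
  unfolding psd_tar_V_def psd_forcing_set_def by simp

lemma card_sym_diff_le_walk_length:
  assumes "finite V" "S \<in> psd_tar_V V E" "(psd_tar_E V E ^^ k) S T"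
  shows "card (sym_diff S T) \<le> k"
  using assms(3)
proof (induction k arbitrary: T)
  case 0
  then show ?case by simp
next
  case (Suc k)
  from Suc.prems obtain U where U: "(psd_tar_E V E ^^ k) S U" "psd_tar_E V E U T"
    by (rule relpowp_Suc_E)
  then have "U \<in> psd_tar_V V E" "T \<in> psd_tar_V V E" and UT: "card (sym_diff U T) = 1"
    unfolding psd_tar_E_def by simp_all
  then have "finite (sym_diff S U \<union> sym_diff U T)"
    using psd_tar_V_finite[OF assms(1)] assms(2) by blast
  then have "card (sym_diff S T) \<le> card (sym_diff S U \<union> sym_diff U T)"
    by (rule card_mono) blast
  also have "\<dots> \<le> card (sym_diff S U) + card (sym_diff U T)"
    by (rule card_Un_le)
  finally show ?case
    using Suc.IH[OF U(1)] UT by simp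
qed

text \<open>Adding a missing element of T, or removing an element outside T once T \<subseteq> S,
  keeps the set forcing and shrinks the symmetric difference.\<close>
lemma psd_tar_step_towards:
  assumes "S \<in> psd_tar_V V E" "T \<in> psd_tar_V V E" "S \<noteq> T"
  obtains x S' where "x \<in> sym_diff S T" "psd_tar_E V E S S'"
    "sym_diff S' T = sym_diff S T - {x}"
proof -
  have S: "psd_forcing_set V E S" and T: "psd_forcing_set V E T"
    using assms(1,2) unfolding psd_tar_V_def by simp_all
  have SV: "S \<subseteq> V" and TV: "T \<subseteq> V"
    using S T unfolding psd_forcing_set_def by simp_all
  obtain x S' where x: "x \<in> sym_diff S T" and S': "sym_diff S S' = {x}" "psd_forcing_set V E S'"
    and shrink: "sym_diff S' T = sym_diff S T - {x}"
  proof (cases "T \<subseteq> S")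
    case True
    then have "T \<subset> S" using assms(3) by blast
    then obtain x where x: "x \<in> S - T" using psubset_imp_ex_mem by blast
    have "psd_forcing_set V E (S - {x})"
      by (rule psd_forcing_set_superset[OF T]) (use True SV x in blast)+
    moreover have "sym_diff S (S - {x}) = {x}" "sym_diff (S - {x}) T = sym_diff S T - {x}"
      using x by blast+
    ultimately show ?thesis using that[of x "S - {x}"] x by blast
  next
    case False
    then obtain x where x: "x \<in> T - S" by blast
    have "psd_forcing_set V E (insert x S)"
      by (rule psd_forcing_set_superset[OF S]) (use TV SV x in blast)+
    moreover have "sym_diff S (insert x S) = {x}" "sym_diff (insert x S) T = sym_diff S T - {x}"
      using x by blast+
    ultimately show ?thesis using that[of x "insert x S"] x by blast
  qed
  moreover have "psd_tar_E V E S S'"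
    unfolding psd_tar_E_def psd_tar_V_def using S S' by simp
  ultimately show ?thesis using that by blast
qed

lemma psd_tar_walk:
  assumes "finite V" "S \<in> psd_tar_V V E" "T \<in> psd_tar_V V E"
  shows "(psd_tar_E V E ^^ card (sym_diff S T)) S T"
  using assms(2)
proof (induction "card (sym_diff S T)" arbitrary: S)
  case 0
  have "finite (sym_diff S T)"
    using psd_tar_V_finite[OF assms(1)] 0(2) assms(3) by blast
  then show ?case using 0 by auto
next
  case (Suc n)
  have "S \<noteq> T" using Suc.hyps(2) by auto
  then obtain x S' where x: "x \<in> sym_diff S T" and S': "psd_tar_E V E S S'"
    and shrink: "sym_diff S' T = sym_diff S T - {x}"
    using psd_tar_step_towards[OF Suc.prems assms(3)] by blast
  have "finite (sym_diff S T)"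
    using psd_tar_V_finite[OF assms(1)] Suc.prems assms(3) by blast
  then have "n = card (sym_diff S' T)"
    using Suc.hyps(2) x shrink by simp
  moreover have "S' \<in> psd_tar_V V E" using S' unfolding psd_tar_E_def by simp
  ultimately have "(psd_tar_E V E ^^ n) S' T"
    using Suc.hyps(1) by blast
  with S' show ?case
    using Suc.hyps(2) by (metis relpowp_Suc_I2)
qed

lemma relpowp_hom:
  assumes "\<forall>x y. E1 x y \<longrightarrow> x \<in> V1 \<and> y \<in> V1"
    and "\<forall>x\<in>V1. \<forall>y\<in>V1. E1 x y \<longrightarrow> E2 (f x) (f y)"
    and "(E1 ^^ k) x y"
  shows "(E2 ^^ k) (f x) (f y)"
  using assms(3)
proof (induction k arbitrary: y)
  case 0
  then show ?case by simp
next
  case (Suc k)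
  from Suc.prems obtain z where z: "(E1 ^^ k) x z" "E1 z y"
    by (rule relpowp_Suc_E)
  then have "E2 (f z) (f y)" using assms(1,2) by blast
  with Suc.IH[OF z(1)] show ?case
    by (rule relpowp_Suc_I)
qed

lemma card_image_adj:
  assumes "bij_betw f V1 V2" "\<forall>x\<in>V1. \<forall>y\<in>V1. E1 x y \<longleftrightarrow> E2 (f x) (f y)"
    and "\<forall>x y. E1 x y \<longrightarrow> x \<in> V1 \<and> y \<in> V1" "\<forall>x y. E2 x y \<longrightarrow> x \<in> V2 \<and> y \<in> V2" "x \<in> V1"
  shows "card {y. E2 (f x) y} = card {y. E1 x y}"
proof -
  have "{y. E2 (f x) y} = f ` {y. E1 x y}"
    using assms unfolding bij_betw_def by blast
  moreover have "inj_on f {y. E1 x y}"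
    using assms(1,3) unfolding bij_betw_def by (blast intro: inj_on_subset)
  ultimately show ?thesis by (simp add: card_image)
qed

lemma psd_tar_degree_le:
  assumes "finite V"
  shows "card {T. psd_tar_E V E S T} \<le> card V"
proof -
  have "{T. psd_tar_E V E S T} \<subseteq> (\<lambda>x. sym_diff S {x}) ` V"
  proof
    fix T assume "T \<in> {T. psd_tar_E V E S T}"
    then have "card (sym_diff S T) = 1" "S \<subseteq> V" "T \<subseteq> V"
      unfolding psd_tar_E_def using psd_tar_V_subset by blast+
    then obtain x where x: "sym_diff S T = {x}"
      by (meson card_1_singletonE)
    then have "T = sym_diff S {x}" and "x \<in> V"
      using \<open>S \<subseteq> V\<close> \<open>T \<subseteq> V\<close> by blast+
    then show "T \<in> (\<lambda>x. sym_diff S {x}) ` V" by blast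
  qed
  then have "card {T. psd_tar_E V E S T} \<le> card ((\<lambda>x. sym_diff S {x}) ` V)"
    using assms by (intro card_mono) simp_all
  also have "\<dots> \<le> card V"
    by (rule card_image_le[OF assms])
  finally show ?thesis .
qed

lemma psd_tar_degree_top:
  assumes "simple_graph V E" "no_isolated V E"
  shows "card {T. psd_tar_E V E V T} = card V"
proof -
  have fin: "finite V" using assms(1) unfolding simple_graph_def by simp
  have "(\<lambda>v. V - {v}) ` V \<subseteq> {T. psd_tar_E V E V T}"
  proof
    fix T assume "T \<in> (\<lambda>v. V - {v}) ` V"
    then obtain v where v: "v \<in> V" "T = V - {v}" by blast
    then have "sym_diff V T = {v}" by blast
    moreover have "T \<in> psd_tar_V V E"
      unfolding psd_tar_V_def using psd_forcing_set_Diff_singleton[OF assms v(1)] v(2) by simp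
    ultimately show "T \<in> {T. psd_tar_E V E V T}"
      unfolding psd_tar_E_def using psd_tar_V_top by simp
  qed
  moreover have "finite {T. psd_tar_E V E V T}"
    by (rule finite_subset[of _ "Pow V"]) (use fin psd_tar_V_subset in \<open>auto simp: psd_tar_E_def\<close>)
  ultimately have "card ((\<lambda>v. V - {v}) ` V) \<le> card {T. psd_tar_E V E V T}"
    by (rule card_mono[rotated])
  moreover have "card ((\<lambda>v. V - {v}) ` V) = card V"
    by (rule card_image) (rule inj_onI, blast)
  ultimately show ?thesis
    using psd_tar_degree_le[OF fin] by (simp add: le_antisym)
qed

section \<open>Isomorphisms of TAR graphs\<close>

locale psd_tar_iso =
  fixes V :: "'a set" and E :: "'a \<Rightarrow> 'a \<Rightarrow> bool"
    and V' :: "'b set" and E' :: "'b \<Rightarrow> 'b \<Rightarrow> bool"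
    and \<phi> :: "'a set \<Rightarrow> 'b set"
  assumes finite_V: "finite V" and finite_V': "finite V'"
    and bij: "bij_betw \<phi> (psd_tar_V V E) (psd_tar_V V' E')"
    and adj_iff: "\<forall>S\<in>psd_tar_V V E. \<forall>T\<in>psd_tar_V V E.
      psd_tar_E V E S T \<longleftrightarrow> psd_tar_E V' E' (\<phi> S) (\<phi> T)"
begin

lemma mem_psd_tar_V: "S \<in> psd_tar_V V E \<Longrightarrow> \<phi> S \<in> psd_tar_V V' E'"
  using bij bij_betwE by blast

lemma inverse_iso: "psd_tar_iso V' E' V E (inv_into (psd_tar_V V E) \<phi>)"
proof
  let ?\<psi> = "inv_into (psd_tar_V V E) \<phi>"
  show "bij_betw ?\<psi> (psd_tar_V V' E') (psd_tar_V V E)"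
    using bij by (rule bij_betw_inv_into)
  show "\<forall>S\<in>psd_tar_V V' E'. \<forall>T\<in>psd_tar_V V' E'.
      psd_tar_E V' E' S T \<longleftrightarrow> psd_tar_E V E (?\<psi> S) (?\<psi> T)"
  proof (intro ballI)
    fix S T assume "S \<in> psd_tar_V V' E'" "T \<in> psd_tar_V V' E'"
    then have "?\<psi> S \<in> psd_tar_V V E" "?\<psi> T \<in> psd_tar_V V E"
      and "\<phi> (?\<psi> S) = S" "\<phi> (?\<psi> T) = T"
      using bij by (simp_all add: bij_betw_def inv_into_into f_inv_into_f)
    then show "psd_tar_E V' E' S T \<longleftrightarrow> psd_tar_E V E (?\<psi> S) (?\<psi> T)"
      using adj_iff by metis
  qed
qed (use finite_V finite_V' in simp_all)

lemma card_sym_diff_le: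
  assumes "S \<in> psd_tar_V V E" "T \<in> psd_tar_V V E"
  shows "card (sym_diff (\<phi> S) (\<phi> T)) \<le> card (sym_diff S T)"
proof (rule card_sym_diff_le_walk_length[OF finite_V' mem_psd_tar_V[OF assms(1)]])
  have edges: "\<forall>S T. psd_tar_E V E S T \<longrightarrow> S \<in> psd_tar_V V E \<and> T \<in> psd_tar_V V E"
    by (simp add: psd_tar_E_def)
  have hom: "\<forall>S\<in>psd_tar_V V E. \<forall>T\<in>psd_tar_V V E. psd_tar_E V E S T \<longrightarrow> psd_tar_E V' E' (\<phi> S) (\<phi> T)"
    using adj_iff by blast
  show "(psd_tar_E V' E' ^^ card (sym_diff S T)) (\<phi> S) (\<phi> T)"
    by (rule relpowp_hom[of "psd_tar_E V E" "psd_tar_V V E" "psd_tar_E V' E'" \<phi>, OF edges hom psd_tar_walk[OF finite_V assms]])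
qed

text \<open>Distances in the TAR graph are sizes of symmetric differences, so a TAR isomorphism
  preserves them.\<close>
lemma card_sym_diff:
  assumes "S \<in> psd_tar_V V E" "T \<in> psd_tar_V V E"
  shows "card (sym_diff (\<phi> S) (\<phi> T)) = card (sym_diff S T)"
proof -
  interpret inv: psd_tar_iso V' E' V E "inv_into (psd_tar_V V E) \<phi>"
    by (rule inverse_iso)
  have "inv_into (psd_tar_V V E) \<phi> (\<phi> X) = X" if "X \<in> psd_tar_V V E" for X
    using bij that by (simp add: bij_betw_inv_into_left)
  then have "card (sym_diff S T) \<le> card (sym_diff (\<phi> S) (\<phi> T))"
    using inv.card_sym_diff_le[OF mem_psd_tar_V[OF assms(1)] mem_psd_tar_V[OF assms(2)]] assms
    by simp
  with card_sym_diff_le[OF assms] show ?thesis by simp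
qed

lemma card_le:
  assumes "simple_graph V E" "no_isolated V E"
  shows "card V \<le> card V'"
proof -
  have "card V = card {T. psd_tar_E V E V T}"
    by (rule psd_tar_degree_top[OF assms, symmetric])
  also have "\<dots> = card {T. psd_tar_E V' E' (\<phi> V) T}"
    by (rule card_image_adj[OF bij adj_iff _ _ psd_tar_V_top, symmetric])
      (auto simp: psd_tar_E_def)
  also have "\<dots> \<le> card V'"
    by (rule psd_tar_degree_le[OF finite_V'])
  finally show ?thesis .
qed

lemma card_eq:
  assumes "simple_graph V E" "no_isolated V E" "simple_graph V' E'" "no_isolated V' E'"
  shows "card V = card V'"
proof -
  interpret inv: psd_tar_iso V' E' V E "inv_into (psd_tar_V V E) \<phi>"
    by (rule inverse_iso)
  show ?thesis
    using card_le[OF assms(1,2)] inv.card_le[OF assms(3,4)] by simp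
qed

end

section \<open>Forcing sets of the complete bipartite graph with parts of sizes 2 and q\<close>

text \<open>The forcing sets of K_{2,q} with parts {a, a'} and S: everything except the singletons
  of the small part and the proper subsets of the large part.\<close>
definition K2q_forcing_family :: "'a \<Rightarrow> 'a \<Rightarrow> 'a set \<Rightarrow> 'a set set" where
  "K2q_forcing_family a a' S = Pow (insert a (insert a' S)) - ({{a}, {a'}} \<union> (Pow S - {S}))"

lemma mem_K2q_forcing_family_iff:
  assumes "finite S" "2 \<le> card S"
  shows "X \<in> K2q_forcing_family a a' S \<longleftrightarrow>
    X \<subseteq> insert a (insert a' S) \<and> 2 \<le> card X \<and> (X \<subseteq> S \<longrightarrow> X = S)"
proof
  assume "X \<in> K2q_forcing_family a a' S"
  then have XV: "X \<subseteq> insert a (insert a' S)" and ne: "X \<noteq> {a}" "X \<noteq> {a'}"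
    and nsub: "X \<subseteq> S \<longrightarrow> X = S"
    unfolding K2q_forcing_family_def by blast+
  have "2 \<le> card X"
  proof (cases "X \<subseteq> S")
    case True
    then show ?thesis using nsub assms(2) by simp
  next
    case False
    then obtain x where x: "x \<in> X" "x \<in> {a, a'}" using XV by blast
    then obtain y where "y \<in> X" "y \<noteq> x" using ne by blast
    moreover have "finite X" using XV assms(1) finite_subset by blast
    ultimately have "card {x, y} \<le> card X"
      using x by (intro card_mono) auto
    then show ?thesis using \<open>y \<noteq> x\<close> by simp
  qed
  then show "X \<subseteq> insert a (insert a' S) \<and> 2 \<le> card X \<and> (X \<subseteq> S \<longrightarrow> X = S)"
    using XV nsub by blast
next
  assume X: "X \<subseteq> insert a (insert a' S) \<and> 2 \<le> card X \<and> (X \<subseteq> S \<longrightarrow> X = S)"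
  then have "card X \<noteq> 1" by simp
  then have "X \<noteq> {a}" "X \<noteq> {a'}" by auto
  with X show "X \<in> K2q_forcing_family a a' S"
    unfolding K2q_forcing_family_def by blast
qed

lemma card_K2q_forcing_family:
  assumes "finite S" "a \<noteq> a'" "a \<notin> S" "a' \<notin> S"
  shows "card (K2q_forcing_family a a' S) = 2 ^ (card S + 2) - (2 ^ card S + 1)"
proof -
  let ?M = "{{a}, {a'}} \<union> (Pow S - {S})"
  have "card ?M = card {{a}, {a'}} + card (Pow S - {S})"
    using assms by (intro card_Un_disjoint) auto
  also have "\<dots> = 2 ^ card S + 1"
    using assms by (simp add: card_Pow Suc_leI)
  finally have "card ?M = 2 ^ card S + 1" .
  moreover have "?M \<subseteq> Pow (insert a (insert a' S))" by blast
  moreover have "card (insert a (insert a' S)) = card S + 2" using assms by simp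
  ultimately show ?thesis
    unfolding K2q_forcing_family_def using assms
    by (simp add: card_Diff_subset card_Pow)
qed

lemma K2q_forcing_family_card_eq_2:
  assumes "finite S" "card S = 2"
  shows "K2q_forcing_family a a' S = {X. X \<subseteq> insert a (insert a' S) \<and> 2 \<le> card X}"
proof -
  have "X \<subseteq> S \<longrightarrow> X = S" if "2 \<le> card X" for X
    using card_seteq[OF assms(1)] that assms(2) by simp
  moreover have "2 \<le> card S" using assms(2) by simp
  ultimately show ?thesis
    using mem_K2q_forcing_family_iff[OF assms(1)] by blast
qed

lemma K2q_V_eq: "K2q_V q = insert 0 (insert 1 {2..<q+2})"
  unfolding K2q_V_def by auto

lemma K2q_E_iff: "K2q_E q x y \<longleftrightarrow> x < q + 2 \<and> y < q + 2 \<and> (x < 2 \<longleftrightarrow> 2 \<le> y)"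
  unfolding K2q_E_def K2q_V_def by auto

lemma simple_graph_K2q: "simple_graph (K2q_V q) (K2q_E q)"
  unfolding simple_graph_def K2q_E_iff K2q_V_def by auto

lemma no_isolated_K2q:
  assumes "0 < q"
  shows "no_isolated (K2q_V q) (K2q_E q)"
  unfolding no_isolated_def
proof
  fix v assume "v \<in> K2q_V q"
  then have "K2q_E q v (if v < 2 then 2 else 0)" "(if v < 2 then 2 else 0) \<in> K2q_V q"
    using assms by (auto simp: K2q_E_iff K2q_V_def)
  then show "\<exists>u\<in>K2q_V q. K2q_E q v u" by blast
qed

lemma psd_forcing_set_K2q_superset_small_part:
  assumes "{0, 1} \<subseteq> T" "T \<subseteq> K2q_V q"
  shows "psd_forcing_set (K2q_V q) (K2q_E q) T"
proof (rule psd_forcing_set_if_white_independent)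
  have large: "2 \<le> w \<and> w < q + 2" if "w \<in> K2q_V q - T" for w
  proof -
    have "w \<notin> {0, 1}" using that assms(1) by (meson DiffD2 subsetD)
    then show ?thesis using that unfolding K2q_V_def by auto
  qed
  show "\<forall>w\<in>K2q_V q - T. \<exists>u\<in>T. K2q_E q u w"
  proof
    fix w assume "w \<in> K2q_V q - T"
    then have "K2q_E q 0 w" using large by (simp add: K2q_E_iff)
    then show "\<exists>u\<in>T. K2q_E q u w" using assms(1) by blast
  qed
  show "\<forall>w\<in>K2q_V q - T. \<forall>w'\<in>K2q_V q - T. \<not> K2q_E q w w'"
  proof (intro ballI)
    fix w w' assume "w \<in> K2q_V q - T" "w' \<in> K2q_V q - T"
    then show "\<not> K2q_E q w w'" using large[of w] large[of w'] by (simp add: K2q_E_iff)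
  qed
  show "finite (K2q_V q)" unfolding K2q_V_def by simp
qed (rule assms(2))

lemma psd_forcing_set_K2q_large_part:
  assumes "0 < q"
  shows "psd_forcing_set (K2q_V q) (K2q_E q) {2..<q+2}"
proof (rule psd_forcing_set_if_white_independent)
  have "K2q_V q - {2..<q+2} = {0, 1}" unfolding K2q_V_def by auto
  then show "\<forall>w\<in>K2q_V q - {2..<q+2}. \<exists>u\<in>{2..<q+2}. K2q_E q u w"
    and "\<forall>w\<in>K2q_V q - {2..<q+2}. \<forall>w'\<in>K2q_V q - {2..<q+2}. \<not> K2q_E q w w'"
    using assms by (auto simp: K2q_E_iff)
qed (auto simp: K2q_V_def)

text \<open>A vertex y of the large part forces the other small vertex 1 - x, its only white
  neighbour; afterwards the whole small part is blue.\<close>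
lemma psd_forcing_set_K2q_pair:
  assumes "x < 2" "2 \<le> y" "y < q + 2"
  shows "psd_forcing_set (K2q_V q) (K2q_E q) {x, y}"
proof (rule psd_forcing_set_if_force)
  have "1 - x \<noteq> x" "1 - x < 2" using assms(1) by arith+
  then have white: "1 - x \<in> K2q_V q - {x, y}"
    using assms unfolding K2q_V_def by auto
  have "\<forall>z\<in>white_comp (K2q_V q) (K2q_E q) {x, y} (1 - x). K2q_E q y z \<longrightarrow> z = 1 - x"
    using white_comp_subset[where E = "K2q_E q", OF white] assms by (auto simp: K2q_E_iff)
  then show "psd_force (K2q_V q) (K2q_E q) {x, y} y (1 - x)"
    unfolding psd_force_def using white assms by (auto simp: K2q_E_iff)
  show "psd_forcing_set (K2q_V q) (K2q_E q) (insert (1 - x) {x, y})"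
    by (rule psd_forcing_set_K2q_superset_small_part) (use assms in \<open>auto simp: K2q_V_def\<close>)
qed

text \<open>The white set of {x} is connected through 1 - x, and x sees all of the at least two
  white vertices of the large part.\<close>
lemma not_psd_forcing_set_K2q_singleton:
  assumes "2 \<le> q" "x < 2"
  shows "\<not> psd_forcing_set (K2q_V q) (K2q_E q) {x}"
proof (rule not_psd_forcing_set)
  have x': "1 - x < 2" "1 - x \<noteq> x" using assms(2) by arith+
  show "{x} \<subseteq> K2q_V q" using assms unfolding K2q_V_def by simp
  have "1 - x \<in> K2q_V q" using x' unfolding K2q_V_def by simp
  then show "{x} \<noteq> K2q_V q" using x'(2) by blast
  fix u w assume u: "u \<in> {x}" and w: "w \<in> K2q_V q - {x}" and "K2q_E q u w"
  then have w2: "2 \<le> w" "w < q + 2" using assms(2) by (simp_all add: K2q_E_iff)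
  define z where "z = (if w = 2 then 3 else (2::nat))"
  have z: "2 \<le> z" "z < q + 2" "z \<noteq> w" using assms(1) unfolding z_def by simp_all
  have "1 - x \<in> white_comp (K2q_V q) (K2q_E q) {x} w"
    by (rule white_comp_step[OF white_comp_refl[OF w] w])
      (use assms x' w2 in \<open>simp_all add: K2q_V_def K2q_E_iff\<close>)
  then have "z \<in> white_comp (K2q_V q) (K2q_E q) {x} w"
    by (rule white_comp_step) (use assms x' z in \<open>simp_all add: K2q_V_def K2q_E_iff\<close>)
  moreover have "K2q_E q u z"
    using u assms z by (simp add: K2q_E_iff)
  ultimately show "\<exists>z\<in>white_comp (K2q_V q) (K2q_E q) {x} w. K2q_E q u z \<and> z \<noteq> w"
    using z(3) by blast
qed

text \<open>The white set of T contains both small vertices and a large vertex b outside T, hence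
  is connected, and every blue vertex sees both small vertices.\<close>
lemma not_psd_forcing_set_K2q_psubset:
  assumes "T \<subset> {2..<q+2}"
  shows "\<not> psd_forcing_set (K2q_V q) (K2q_E q) T"
proof (rule not_psd_forcing_set)
  show "T \<subseteq> K2q_V q" using assms unfolding K2q_V_def by auto
  have "0 \<in> K2q_V q" "0 \<notin> T" using assms unfolding K2q_V_def by auto
  then show "T \<noteq> K2q_V q" by blast
  obtain b where b: "b \<in> {2..<q+2}" "b \<notin> T" using assms by blast
  fix u w assume u: "u \<in> T" and w: "w \<in> K2q_V q - T" and "K2q_E q u w"
  then have u2: "2 \<le> u" "u < q + 2" and w2: "w < 2"
    using assms by (auto simp: K2q_E_iff)
  have w': "1 - w < 2" "1 - w \<noteq> w" using w2 by arith+
  have "1 - w \<notin> T" using assms w'(1) by auto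
  have "b \<in> white_comp (K2q_V q) (K2q_E q) T w"
    by (rule white_comp_step[OF white_comp_refl[OF w] w])
      (use b w2 in \<open>simp_all add: K2q_V_def K2q_E_iff\<close>)
  then have "1 - w \<in> white_comp (K2q_V q) (K2q_E q) T w"
    by (rule white_comp_step) (use b w' \<open>1 - w \<notin> T\<close> in \<open>simp_all add: K2q_V_def K2q_E_iff\<close>)
  moreover have "K2q_E q u (1 - w)"
    using u2 w'(1) by (simp add: K2q_E_iff)
  ultimately show "\<exists>z\<in>white_comp (K2q_V q) (K2q_E q) T w. K2q_E q u z \<and> z \<noteq> w"
    using w'(2) by blast
qed

lemma psd_forcing_set_K2q:
  assumes "0 < q" "T \<subseteq> K2q_V q" "T \<noteq> {0}" "T \<noteq> {1}" "\<not> T \<subset> {2..<q+2}"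
  shows "psd_forcing_set (K2q_V q) (K2q_E q) T"
proof (cases "{2..<q+2} \<subseteq> T")
  case True
  then show ?thesis
    using psd_forcing_set_superset[OF psd_forcing_set_K2q_large_part[OF assms(1)]] assms(2) by simp
next
  case False
  with assms(5) have "\<not> T \<subseteq> {2..<q+2}" by blast
  then obtain x where "x \<in> T" "x \<notin> {2..<q+2}" by blast
  with assms(2) have x: "x \<in> T" "x < 2" unfolding K2q_V_def by auto
  then have "x = 0 \<or> x = 1" by arith
  then have "T \<noteq> {x}" using assms(3,4) by blast
  with x obtain y where y: "y \<in> T" "y \<noteq> x" by auto
  show ?thesis
  proof (cases "y < 2")
    case True
    then have "(x = 0 \<and> y = 1) \<or> (x = 1 \<and> y = 0)" using x(2) y(2) by arith
    then have "{0, 1} \<subseteq> T" using x(1) y(1) by blast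
    then show ?thesis using psd_forcing_set_K2q_superset_small_part assms(2) by blast
  next
    case False
    moreover have "y < q + 2" using y assms(2) unfolding K2q_V_def by auto
    ultimately have "psd_forcing_set (K2q_V q) (K2q_E q) {x, y}"
      using psd_forcing_set_K2q_pair[OF x(2)] by simp
    then show ?thesis using psd_forcing_set_superset assms(2) x y by blast
  qed
qed

theorem psd_tar_V_K2q:
  assumes "2 \<le> q"
  shows "psd_tar_V (K2q_V q) (K2q_E q) = K2q_forcing_family 0 1 {2..<q+2}"
proof (rule set_eqI)
  fix T
  have "psd_forcing_set (K2q_V q) (K2q_E q) T \<longleftrightarrow>
    T \<subseteq> K2q_V q \<and> T \<noteq> {0} \<and> T \<noteq> {1} \<and> \<not> T \<subset> {2..<q+2}"
  proof
    assume F: "psd_forcing_set (K2q_V q) (K2q_E q) T"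
    then have "T \<subseteq> K2q_V q" unfolding psd_forcing_set_def by simp
    moreover have "T \<noteq> {0}" "T \<noteq> {1}"
      using F not_psd_forcing_set_K2q_singleton[OF assms, of 0]
        not_psd_forcing_set_K2q_singleton[OF assms, of 1] by auto
    moreover have "\<not> T \<subset> {2..<q+2}"
      using F not_psd_forcing_set_K2q_psubset by blast
    ultimately show "T \<subseteq> K2q_V q \<and> T \<noteq> {0} \<and> T \<noteq> {1} \<and> \<not> T \<subset> {2..<q+2}"
      by blast
  next
    assume "T \<subseteq> K2q_V q \<and> T \<noteq> {0} \<and> T \<noteq> {1} \<and> \<not> T \<subset> {2..<q+2}"
    moreover have "0 < q" using assms by simp
    ultimately show "psd_forcing_set (K2q_V q) (K2q_E q) T"
      using psd_forcing_set_K2q by blast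
  qed
  then show "T \<in> psd_tar_V (K2q_V q) (K2q_E q) \<longleftrightarrow> T \<in> K2q_forcing_family 0 1 {2..<q+2}"
    unfolding psd_tar_V_def K2q_forcing_family_def K2q_V_eq by blast
qed

lemma ex_psd_forcing_set_K2q_pair:
  assumes "0 < q" "x \<in> K2q_V q"
  obtains y where "psd_forcing_set (K2q_V q) (K2q_E q) {x, y}"
proof (cases "x < 2")
  case True
  have "psd_forcing_set (K2q_V q) (K2q_E q) {x, 2}"
    by (rule psd_forcing_set_K2q_pair) (use True assms(1) in simp_all)
  then show ?thesis by (rule that)
next
  case False
  have "psd_forcing_set (K2q_V q) (K2q_E q) {0, x}"
    by (rule psd_forcing_set_K2q_pair) (use False assms(2) in \<open>simp_all add: K2q_V_def\<close>)
  then have "psd_forcing_set (K2q_V q) (K2q_E q) {x, 0}" by (simp add: insert_commute)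
  then show ?thesis by (rule that)
qed

lemma ex_K2q_labelling:
  assumes "finite S" "a \<noteq> a'" "a \<notin> S" "a' \<notin> S"
  obtains f where "bij_betw f (insert a (insert a' S)) (K2q_V (card S))"
    "\<And>x. x \<in> insert a (insert a' S) \<Longrightarrow> f x < 2 \<longleftrightarrow> x \<in> {a, a'}"
proof -
  let ?V = "insert a (insert a' S)" and ?q = "card S"
  obtain g where g: "bij_betw g S {0..<?q}"
    using ex_bij_betw_finite_nat[OF assms(1)] by blast
  define f where "f x = (if x = a then 0 else if x = a' then 1 else g x + 2)" for x
  have "f ` S = (\<lambda>n. n + 2) ` g ` S"
    using assms(3,4) unfolding f_def image_image by (intro image_cong) auto
  also have "\<dots> = (\<lambda>n. n + 2) ` {0..<?q}"
    using g unfolding bij_betw_def by simp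
  also have "\<dots> = {2..<?q + 2}"
    by (subst image_add_atLeastLessThan') (simp add: numeral_2_eq_2)
  finally have "f ` S = {2..<?q + 2}" .
  moreover have "f a = 0" "f a' = 1" using assms(2) by (simp_all add: f_def)
  ultimately have "f ` ?V = K2q_V ?q"
    unfolding K2q_V_eq by simp
  moreover have "card (f ` ?V) = card ?V"
    unfolding \<open>f ` ?V = K2q_V ?q\<close> using assms(1-4) unfolding K2q_V_def by simp
  then have "inj_on f ?V"
    using assms(1) by (intro eq_card_imp_inj_on) simp_all
  ultimately have "bij_betw f ?V (K2q_V ?q)"
    unfolding bij_betw_def by simp
  moreover have "f x < 2 \<longleftrightarrow> x \<in> {a, a'}" if "x \<in> ?V" for x
    using that assms(2) unfolding f_def by auto
  ultimately show ?thesis by (rule that)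
qed

lemma graph_iso_K2q_if_adj_iff:
  assumes "finite S" "a \<noteq> a'" "a \<notin> S" "a' \<notin> S"
    and adj: "\<forall>x\<in>insert a (insert a' S). \<forall>y\<in>insert a (insert a' S). E x y \<longleftrightarrow> (x \<in> {a, a'} \<longleftrightarrow> y \<in> S)"
  shows "graph_iso (insert a (insert a' S)) E (K2q_V (card S)) (K2q_E (card S))"
proof -
  let ?V = "insert a (insert a' S)" and ?q = "card S"
  obtain f where bij: "bij_betw f ?V (K2q_V ?q)" and small: "\<And>x. x \<in> ?V \<Longrightarrow> f x < 2 \<longleftrightarrow> x \<in> {a, a'}"
    using ex_K2q_labelling[OF assms(1-4)] by blast
  have "E x y \<longleftrightarrow> K2q_E ?q (f x) (f y)" if "x \<in> ?V" "y \<in> ?V" for x y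
  proof -
    have "f x \<in> K2q_V ?q" "f y \<in> K2q_V ?q"
      using bij_betwE[OF bij] that by blast+
    then have "f x < ?q + 2" "f y < ?q + 2"
      unfolding K2q_V_def by simp_all
    then have "K2q_E ?q (f x) (f y) \<longleftrightarrow> (f x < 2 \<longleftrightarrow> \<not> f y < 2)"
      unfolding K2q_E_iff by linarith
    also have "\<dots> \<longleftrightarrow> (x \<in> {a, a'} \<longleftrightarrow> y \<in> S)"
      using small[OF that(1)] small[OF that(2)] that(2) assms(3,4) by blast
    finally show ?thesis using adj that by blast
  qed
  with bij show ?thesis
    unfolding graph_iso_def by blast
qed

section \<open>Graphs with the forcing sets of the complete bipartite graph\<close>

locale K2q_forcing_graph =
  fixes V :: "'a set" and E :: "'a \<Rightarrow> 'a \<Rightarrow> bool" and a a' :: 'a and S :: "'a set"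
  assumes simple: "simple_graph V E" and no_isolated: "no_isolated V E"
    and small_neq: "a \<noteq> a'" and small_notin: "a \<notin> S" "a' \<notin> S"
    and V_eq: "V = insert a (insert a' S)" and two_le_card: "2 \<le> card S"
    and forcing_family: "psd_tar_V V E = K2q_forcing_family a a' S"
begin

lemma finite_S: "finite S"
  using simple V_eq unfolding simple_graph_def by simp

lemma S_subset: "S \<subseteq> V"
  using V_eq by blast

lemma adj_sym: "E x y \<Longrightarrow> E y x"
  using simple unfolding simple_graph_def by blast

lemma not_adj_self: "\<not> E x x"
  using simple unfolding simple_graph_def by blast

lemma psd_forcing_set_iff:
  "psd_forcing_set V E X \<longleftrightarrow> X \<subseteq> V \<and> 2 \<le> card X \<and> (X \<subseteq> S \<longrightarrow> X = S)"
proof -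
  have "psd_forcing_set V E X \<longleftrightarrow> X \<in> K2q_forcing_family a a' S"
    using forcing_family unfolding psd_tar_V_def by blast
  then show ?thesis
    unfolding mem_K2q_forcing_family_iff[OF finite_S two_le_card] V_eq .
qed

lemma swap_small_part: "K2q_forcing_graph V E a' a S"
proof
  show "psd_tar_V V E = K2q_forcing_family a' a S"
    using forcing_family unfolding K2q_forcing_family_def by (simp add: insert_commute)
qed (use simple no_isolated small_neq small_notin V_eq two_le_card in \<open>auto simp: insert_commute\<close>)

lemma white_S_Diff: "b \<in> S \<Longrightarrow> V - (S - {b}) = {a, a', b}"
  using V_eq small_notin by auto

text \<open>Removing one vertex b from S leaves a non-forcing set on which no force is possible,
  since a single force would restore a set of size |S| that is forcing.\<close>
lemma no_psd_force_S_Diff: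
  assumes "b \<in> S"
  shows "\<not> psd_force V E (S - {b}) u w"
proof
  assume force: "psd_force V E (S - {b}) u w"
  then have w: "w \<in> {a, a', b}"
    using white_S_Diff[OF assms] unfolding psd_force_def by simp
  have "psd_forcing_set V E (insert w (S - {b}))"
  proof (cases "w = b")
    case True
    then show ?thesis
      using assms psd_forcing_set_iff two_le_card S_subset by (simp add: insert_absorb)
  next
    case False
    then have "w \<notin> S" "w \<in> V" using w small_notin V_eq by auto
    moreover have "card (insert w (S - {b})) = card S"
      using \<open>w \<notin> S\<close> assms finite_S two_le_card by (simp add: card_Suc_Diff1)
    ultimately show ?thesis
      using psd_forcing_set_iff two_le_card assms V_eq by auto
  qed
  then have "psd_forcing_set V E (S - {b})"
    by (rule psd_forcing_set_if_force[OF force])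
  then show False
    using psd_forcing_set_iff assms by blast
qed

lemma has_white_neighbour:
  assumes "b \<in> S" "v \<in> {a, a', b}"
  shows "\<exists>y\<in>{a, a', b}. E v y"
proof (rule ccontr)
  assume no_nbr: "\<not> (\<exists>y\<in>{a, a', b}. E v y)"
  have v: "v \<in> V - (S - {b})" using white_S_Diff[OF assms(1)] assms(2) by simp
  obtain u where "u \<in> V" "E v u"
    using no_isolated v unfolding no_isolated_def by blast
  then have "u \<in> S - {b}" "E u v"
    using no_nbr white_S_Diff[OF assms(1)] adj_sym by blast+
  moreover have "white_comp V E (S - {b}) v = {v}"
    using white_comp_eq_singleton[OF v] no_nbr white_S_Diff[OF assms(1)] by simp
  ultimately have "psd_force V E (S - {b}) u v"
    unfolding psd_force_def using v by blast
  then show False using no_psd_force_S_Diff[OF assms(1)] by blast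
qed

lemma two_white_neighbours:
  assumes "b \<in> S" "u \<in> S - {b}" "w \<in> {a, a', b}" "E u w"
  shows "\<exists>y\<in>{a, a', b}. y \<noteq> w \<and> E u y"
proof (rule ccontr)
  assume "\<not> ?thesis"
  moreover have "w \<in> V - (S - {b})" using white_S_Diff[OF assms(1)] assms(3) by simp
  moreover note white_comp_subset[OF this, of E]
  ultimately have "psd_force V E (S - {b}) u w"
    unfolding psd_force_def white_S_Diff[OF assms(1)] using assms(2,4) by blast
  then show False using no_psd_force_S_Diff[OF assms(1)] by blast
qed

lemma card_V: "card V = card S + 2"
  using V_eq small_neq small_notin finite_S by simp

lemma psd_force_from_pair:
  assumes "x \<in> {a, a'}" "y \<in> V" "y \<noteq> x"
  shows "\<exists>u w. psd_force V E {x, y} u w"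
proof (rule psd_force_exists)
  have card: "card {x, y} = 2" using assms(3) by simp
  then have "2 \<le> card {x, y}" by simp
  moreover have "{x, y} \<subseteq> V" "\<not> {x, y} \<subseteq> S"
    using assms(1,2) V_eq small_notin by auto
  ultimately show "psd_forcing_set V E {x, y}"
    unfolding psd_forcing_set_iff by blast
  show "{x, y} \<noteq> V"
    using card card_V two_le_card by auto
qed

lemma psd_force_from_S: "\<exists>u w. psd_force V E S u w"
proof (rule psd_force_exists)
  show "psd_forcing_set V E S" using psd_forcing_set_iff S_subset two_le_card by simp
  show "S \<noteq> V" using V_eq small_notin by auto
qed

lemma adj_S_if_not_adj_small:
  assumes "\<not> E a a'" "b \<in> S"
  shows "E a b" "E a' b"
proof -
  obtain y where "y \<in> {a, a', b}" "E a y"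
    using has_white_neighbour[OF assms(2)] by blast
  then show "E a b" using assms(1) not_adj_self by blast
  obtain y' where "y' \<in> {a, a', b}" "E a' y'"
    using has_white_neighbour[OF assms(2)] by blast
  then show "E a' b" using assms(1) not_adj_self adj_sym by blast
qed

text \<open>Colouring a and b blue, the white vertices are held together by a', which sees all of S;
  a sees at least two white vertices of S, and b sees a' and b'.\<close>
lemma not_adj_S_if_not_adj_small_three_le_card:
  assumes not_adj: "\<not> E a a'" and "3 \<le> card S" and b: "b \<in> S" and b': "b' \<in> S"
  shows "\<not> E b b'"
proof
  assume bb': "E b b'"
  obtain u w where force: "psd_force V E {a, b} u w"
    using psd_force_from_pair[of a b] b S_subset small_notin by blast
  then have u: "u \<in> {a, b}" and w: "w \<in> V - {a, b}" and "E u w"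
    unfolding psd_force_def by blast+
  have a': "a' \<in> V - {a, b}" using V_eq small_neq small_notin b by blast
  have comp: "white_comp V E {a, b} w = V - {a, b}"
  proof (rule white_comp_eq_if_hub[OF _ a' _ w])
    show "\<forall>x y. E x y \<longrightarrow> E y x" using adj_sym by blast
    show "\<forall>x\<in>V - {a, b} - {a'}. E a' x" using adj_S_if_not_adj_small[OF not_adj] V_eq by blast
  qed
  have "\<not> psd_force V E {a, b} u w"
  proof (cases "u = a")
    case True
    obtain x where x: "x \<in> S" "x \<noteq> b" "x \<noteq> w"
      using obtain_avoiding_two[OF finite_S \<open>3 \<le> card S\<close>] by blast
    then have "x \<in> V - {a, b}" using S_subset small_notin by blast
    with x show ?thesis
      using not_psd_force_if_two_white_neighbours[OF comp _ w] True
        adj_S_if_not_adj_small[OF not_adj] \<open>E u w\<close> by metis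
  next
    case False
    then have "u = b" using u by blast
    have "b' \<in> V - {a, b}" "a' \<noteq> b'" using bb' b' S_subset small_notin not_adj_self by blast+
    then show ?thesis
      using not_psd_force_if_two_white_neighbours[OF comp a'] adj_S_if_not_adj_small[OF not_adj b]
        adj_sym bb' \<open>u = b\<close> by blast
  qed
  then show False using force by contradiction
qed

text \<open>Colouring a and a' blue, the white set S = {b, b'} is connected, and both a and a' see
  both of its vertices.\<close>
lemma not_adj_S_if_not_adj_small_card_eq_2:
  assumes not_adj: "\<not> E a a'" and "card S = 2" and b: "b \<in> S" and b': "b' \<in> S"
  shows "\<not> E b b'"
proof
  assume bb': "E b b'"
  have "b \<noteq> b'" using bb' not_adj_self by blast
  then have "card {b, b'} = card S" using \<open>card S = 2\<close> by simp
  moreover have "{b, b'} \<subseteq> S" using b b' by simp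
  ultimately have S: "S = {b, b'}" using card_seteq[OF finite_S, of "{b, b'}"] by simp
  obtain u w where force: "psd_force V E {a, a'} u w"
    using psd_force_from_pair[of a a'] small_neq V_eq by blast
  then have u: "u \<in> {a, a'}" and w: "w \<in> V - {a, a'}"
    unfolding psd_force_def by blast+
  have white: "V - {a, a'} = S" using V_eq small_notin by blast
  have comp: "white_comp V E {a, a'} w = V - {a, a'}"
  proof (rule white_comp_eq_if_hub[OF _ _ _ w])
    show "\<forall>x y. E x y \<longrightarrow> E y x" using adj_sym by blast
    show "b \<in> V - {a, a'}" "\<forall>x\<in>V - {a, a'} - {b}. E b x" using white S b bb' by auto
  qed
  have "\<not> psd_force V E {a, a'} u w"
    using not_psd_force_if_two_white_neighbours[OF comp, of b b' u] white S \<open>b \<noteq> b'\<close>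
      adj_S_if_not_adj_small[OF not_adj] u by auto
  then show False using force by contradiction
qed

lemma not_adj_S_if_not_adj_small:
  assumes "\<not> E a a'" "b \<in> S" "b' \<in> S"
  shows "\<not> E b b'"
proof (cases "3 \<le> card S")
  case True
  then show ?thesis by (rule not_adj_S_if_not_adj_small_three_le_card[OF assms(1) _ assms(2,3)])
next
  case False
  then have "card S = 2" using two_le_card by simp
  then show ?thesis by (rule not_adj_S_if_not_adj_small_card_eq_2[OF assms(1) _ assms(2,3)])
qed

lemma graph_iso_K2q_if_not_adj_small:
  assumes "\<not> E a a'"
  shows "graph_iso V E (K2q_V (card S)) (K2q_E (card S))"
proof -
  have across: "E x y" "E y x" if "x \<in> {a, a'}" "y \<in> S" for x y
    using that adj_S_if_not_adj_small[OF assms] adj_sym by blast+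
  have small: "\<not> E x y" if "x \<in> {a, a'}" "y \<in> {a, a'}" for x y
    using that assms adj_sym not_adj_self by blast
  have "E x y \<longleftrightarrow> (x \<in> {a, a'} \<longleftrightarrow> y \<in> S)" if xy: "x \<in> V" "y \<in> V" for x y
  proof -
    consider "x \<in> {a, a'}" "y \<in> {a, a'}" | "x \<in> {a, a'}" "y \<in> S"
      | "x \<in> S" "y \<in> {a, a'}" | "x \<in> S" "y \<in> S"
      using xy V_eq by blast
    then show ?thesis
    proof cases
      case 1
      then show ?thesis using small small_notin by blast
    next
      case 2
      then show ?thesis using across by blast
    next
      case 3
      then show ?thesis using across small_notin by blast
    next
      case 4
      then show ?thesis using not_adj_S_if_not_adj_small[OF assms] small_notin by blast
    qed
  qed
  then show ?thesis
    using graph_iso_K2q_if_adj_iff[OF finite_S small_neq small_notin] V_eq by simp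
qed

lemma adj_small_part_if_mem_S: "b \<in> S \<Longrightarrow> E a b \<or> E a' b"
  using has_white_neighbour[of b b] not_adj_self adj_sym by blast

lemma adj_S_if_adj_only_a:
  assumes "u \<in> S" "E u a" "\<not> E u a'" "b \<in> S" "b \<noteq> u"
  shows "E u b"
  using two_white_neighbours[of b u a] assms by blast

lemma adj_if_not_adj_a:
  assumes "x \<in> S" "\<not> E a x"
  shows "E x a'" "\<forall>y\<in>S - {x}. E x y"
proof -
  interpret swapped: K2q_forcing_graph V E a' a S by (rule swap_small_part)
  show "E x a'" using adj_small_part_if_mem_S[OF assms(1)] assms(2) adj_sym by blast
  then show "\<forall>y\<in>S - {x}. E x y"
    using swapped.adj_S_if_adj_only_a[OF assms(1)] assms(2) adj_sym by blast
qed

text \<open>If b0 were the only neighbour of a in S, colour a and a second vertex b of S blue: the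
  white vertices are held together by a third vertex c of S, and both possible forcing
  vertices a and b see two white vertices.\<close>
lemma ex_second_S_neighbour:
  assumes "E a a'" "3 \<le> card S" "b0 \<in> S" "E a b0"
  shows "\<exists>x\<in>S - {b0}. E a x"
proof (rule ccontr)
  assume "\<not> ?thesis"
  then have a'_adj: "E x a'" and hub: "\<forall>y\<in>S - {x}. E x y" if "x \<in> S - {b0}" for x
    using adj_if_not_adj_a that by blast+
  obtain b where b: "b \<in> S" "b \<noteq> b0"
    using obtain_avoiding_two[OF finite_S assms(2)] by blast
  obtain c where c: "c \<in> S" "c \<noteq> b0" "c \<noteq> b"
    using obtain_avoiding_two[OF finite_S assms(2)] by blast
  obtain u w where force: "psd_force V E {a, b} u w"
    using psd_force_from_pair[of a b] b S_subset small_notin by blast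
  then have u: "u \<in> {a, b}" and w: "w \<in> V - {a, b}"
    unfolding psd_force_def by blast+
  have white: "a' \<in> V - {a, b}" "b0 \<in> V - {a, b}" "c \<in> V - {a, b}"
    using V_eq small_neq small_notin b c assms(3) by auto
  have comp: "white_comp V E {a, b} w = V - {a, b}"
  proof (rule white_comp_eq_if_hub[OF _ white(3) _ w])
    show "\<forall>x y. E x y \<longrightarrow> E y x" using adj_sym by blast
    show "\<forall>x\<in>V - {a, b} - {c}. E c x"
      using V_eq a'_adj[of c] hub[of c] c by blast
  qed
  have "\<not> psd_force V E {a, b} u w"
  proof (cases "u = a")
    case True
    have "a' \<noteq> b0" using assms(3) small_notin by blast
    then show ?thesis
      using not_psd_force_if_two_white_neighbours[OF comp white(1,2)] True assms(1,4) by blast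
  next
    case False
    then have "u = b" using u by blast
    have "a' \<noteq> c" using c small_notin by blast
    then show ?thesis
      using not_psd_force_if_two_white_neighbours[OF comp white(1,3)] \<open>u = b\<close>
        a'_adj[of b] hub[of b] b c by blast
  qed
  then show False using force by contradiction
qed

text \<open>A force from S goes from some u to a vertex w of {a, a'}; as a \<sim> a', the vertex u
  misses the other vertex of {a, a'} and is therefore adjacent to all of S.\<close>
lemma ex_S_hub_if_adj_small:
  assumes adj: "E a a'"
  obtains u where "u \<in> S" "\<And>b. b \<in> S \<Longrightarrow> b \<noteq> u \<Longrightarrow> E u b"
proof -
  interpret swapped: K2q_forcing_graph V E a' a S by (rule swap_small_part)
  obtain u w where force: "psd_force V E S u w"
    using psd_force_from_S by blast
  then have u: "u \<in> S" and w: "w \<in> {a, a'}" and "E u w"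
    unfolding psd_force_def using V_eq by blast+
  obtain w' where w': "{w, w'} = {a, a'}" "w' \<noteq> w" using w small_neq by blast
  have white_S: "V - S = {a, a'}" using V_eq small_notin by blast
  have "white_comp V E S w = V - S"
    by (rule white_comp_eq_if_hub[of E w]) (use adj adj_sym w w' white_S in auto)
  then have "\<not> E u w'"
    using not_psd_force_if_two_white_neighbours[of V E S w w w' u] force w w' white_S \<open>E u w\<close>
    by blast
  then have "E u b" if "b \<in> S" "b \<noteq> u" for b
    using adj_S_if_adj_only_a swapped.adj_S_if_adj_only_a u that w w' \<open>E u w\<close> by blast
  with u show ?thesis by (rule that)
qed

text \<open>With a hub u in S, the white set S of {a, a'} is connected, so the force from {a, a'}
  to some b0 makes b0 the unique neighbour in S of a or a'.\<close>
lemma not_adj_small_if_three_le_card: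
  assumes "3 \<le> card S"
  shows "\<not> E a a'"
proof
  assume adj: "E a a'"
  interpret swapped: K2q_forcing_graph V E a' a S by (rule swap_small_part)
  obtain u where u: "u \<in> S" and u_hub: "\<And>b. b \<in> S \<Longrightarrow> b \<noteq> u \<Longrightarrow> E u b"
    using ex_S_hub_if_adj_small[OF adj] by blast
  obtain u0 b0 where force0: "psd_force V E {a, a'} u0 b0"
    using psd_force_from_pair[of a a'] small_neq V_eq by blast
  then have u0: "u0 \<in> {a, a'}" and b0: "b0 \<in> S" and "E u0 b0"
    unfolding psd_force_def using V_eq by blast+
  have white_pair: "V - {a, a'} = S" using V_eq small_notin by blast
  have "white_comp V E {a, a'} b0 = V - {a, a'}"
    by (rule white_comp_eq_if_hub[of E u]) (use adj_sym u u_hub b0 white_pair in auto)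
  then have no_other: "\<forall>x\<in>S - {b0}. \<not> E u0 x"
    using force0 white_pair unfolding psd_force_def by blast
  show False
  proof (cases "u0 = a")
    case True
    then show False
      using ex_second_S_neighbour[OF adj assms b0] \<open>E u0 b0\<close> no_other by blast
  next
    case False
    then have "u0 = a'" using u0 by blast
    then show False
      using swapped.ex_second_S_neighbour[OF adj_sym[OF adj] assms b0] \<open>E u0 b0\<close> no_other
      by blast
  qed
qed

lemma ex_not_adj_if_card_eq_2:
  assumes "card S = 2"
  shows "\<exists>x\<in>V. \<exists>y\<in>V. x \<noteq> y \<and> \<not> E x y"
proof (rule ccontr)
  assume "\<not> ?thesis"
  then have complete: "E x y" if "x \<in> V" "y \<in> V" "x \<noteq> y" for x y
    using that by blast
  obtain u w where force: "psd_force V E {a, a'} u w"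
    using psd_force_from_pair[of a a'] small_neq V_eq by blast
  then have u: "u \<in> {a, a'}" and w: "w \<in> S"
    unfolding psd_force_def using V_eq by blast+
  obtain p r where "S = {p, r}" "p \<noteq> r"
    using assms card_2_iff by metis
  then obtain x where x: "x \<in> S" "x \<noteq> w" using w by blast
  have white: "V - {a, a'} = S" using V_eq small_notin by blast
  have "white_comp V E {a, a'} w = V - {a, a'}"
    by (rule white_comp_eq_if_hub[of E w]) (use complete adj_sym w white S_subset in auto)
  moreover have "E u x" "E u w" "u \<noteq> x" "u \<noteq> w"
    using u x w complete S_subset small_notin V_eq by auto
  ultimately have "\<not> psd_force V E {a, a'} u w"
    using not_psd_force_if_two_white_neighbours[of V E "{a, a'}" w x w u] white x w by blast
  then show False using force by contradiction
qed

theorem graph_iso_K2q: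
  "graph_iso V E (K2q_V (card S)) (K2q_E (card S))"
proof (cases "E a a'")
  case False
  then show ?thesis by (rule graph_iso_K2q_if_not_adj_small)
next
  case True
  have "\<not> 3 \<le> card S"
  proof
    assume "3 \<le> card S"
    then have "\<not> E a a'" by (rule not_adj_small_if_three_le_card)
    then show False using True by contradiction
  qed
  then have card_S: "card S = 2" using two_le_card by simp
  then obtain x y where xy: "x \<in> V" "y \<in> V" "x \<noteq> y" "\<not> E x y"
    using ex_not_adj_if_card_eq_2 by blast
  let ?S = "V - {x, y}"
  have V: "V = insert x (insert y ?S)" using xy by blast
  have fin: "finite ?S" using finite_S V_eq by simp
  have card: "card ?S = 2"
    using card_V card_S xy finite_S V_eq by (simp add: card_Diff_subset)
  have "K2q_forcing_graph V E x y ?S"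
  proof
    show "psd_tar_V V E = K2q_forcing_family x y ?S"
      unfolding forcing_family K2q_forcing_family_card_eq_2[OF finite_S card_S]
        K2q_forcing_family_card_eq_2[OF fin card] V_eq[symmetric] V[symmetric] ..
    show "x \<notin> ?S" "y \<notin> ?S" by simp_all
  qed (use simple no_isolated xy(3) V card in simp_all)
  then have "graph_iso V E (K2q_V (card ?S)) (K2q_E (card ?S))"
    using xy(4) by (rule K2q_forcing_graph.graph_iso_K2q_if_not_adj_small)
  then show ?thesis using card card_S by simp
qed

end

section \<open>Graphs whose TAR graph is that of the complete bipartite graph\<close>

lemma two_le_card_if_mem_psd_tar_V_K2q:
  assumes "2 \<le> q" "T \<in> psd_tar_V (K2q_V q) (K2q_E q)"
  shows "2 \<le> card T"
  using assms mem_K2q_forcing_family_iff[of "{2..<q+2}"] by (simp add: psd_tar_V_K2q)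

locale K2q_tar_iso = psd_tar_iso V E "K2q_V q" "K2q_E q" \<phi>
  for V :: "'a set" and E and q and \<phi> +
  assumes two_le_q: "2 \<le> q" and simple: "simple_graph V E" and no_isolated: "no_isolated V E"
begin

lemma card_V: "card V = q + 2"
proof -
  have "no_isolated (K2q_V q) (K2q_E q)" using no_isolated_K2q two_le_q by simp
  then have "card V = card (K2q_V q)"
    by (rule card_eq[OF simple no_isolated simple_graph_K2q])
  then show ?thesis unfolding K2q_V_def by simp
qed

lemma ex_preimage: "T \<in> psd_tar_V (K2q_V q) (K2q_E q) \<Longrightarrow> \<exists>S\<in>psd_tar_V V E. \<phi> S = T"
  using bij_betw_imp_surj_on[OF bij] by (metis imageE)

text \<open>Let U correspond to the full vertex set of K_{2,q}. Enlarging a forcing set T by the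
  complement of U keeps it at distance at most q from U, so U \<inter> T has at least two
  elements.\<close>
lemma two_le_card_forcing: "T \<in> psd_tar_V V E \<Longrightarrow> 2 \<le> card T"
proof -
  assume T: "T \<in> psd_tar_V V E"
  obtain U where U: "U \<in> psd_tar_V V E" "\<phi> U = K2q_V q"
    using ex_preimage psd_tar_V_top by blast
  have UV: "U \<subseteq> V" and TV: "T \<subseteq> V" using U T psd_tar_V_subset by blast+
  let ?T = "T \<union> (V - U)"
  have T': "?T \<in> psd_tar_V V E"
    using psd_forcing_set_superset T TV unfolding psd_tar_V_def by blast
  have T'K: "\<phi> ?T \<subseteq> K2q_V q" "2 \<le> card (\<phi> ?T)"
    using mem_psd_tar_V[OF T'] psd_tar_V_subset two_le_card_if_mem_psd_tar_V_K2q two_le_q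
    by blast+
  have "card V - card (U \<inter> T) = card (sym_diff U ?T)"
    unfolding sym_diff_Un_Diff[OF UV TV]
    by (rule card_Diff_subset[symmetric]) (use UV finite_V in \<open>auto intro: finite_subset\<close>)
  also have "\<dots> = card (sym_diff (K2q_V q) (\<phi> ?T))"
    using card_sym_diff[OF U(1) T'] U(2) by simp
  also have "\<dots> \<le> q"
    using card_sym_diff_of_subset[OF finite_V' T'K(1)] T'K(2) by (simp add: K2q_V_def)
  finally have "2 \<le> card (U \<inter> T)" using card_V by simp
  also have "\<dots> \<le> card T" using TV finite_V by (intro card_mono) (auto intro: finite_subset)
  finally show ?thesis .
qed

text \<open>Every vertex x of K_{2,q} lies in a forcing pair {x, y}; if x \<notin> \<phi> V, the forcing set
  {x, y} \<union> (complement of \<phi> V) is at distance at least q + 1 from \<phi> V, while every forcing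
  set of G is at distance at most q from V.\<close>
lemma image_top: "\<phi> V = K2q_V q"
proof (rule ccontr)
  let ?S = "\<phi> V"
  assume "?S \<noteq> K2q_V q"
  moreover have S: "?S \<in> psd_tar_V (K2q_V q) (K2q_E q)" using mem_psd_tar_V psd_tar_V_top by blast
  ultimately have "?S \<subset> K2q_V q" using psd_tar_V_subset by blast
  then obtain x where x: "x \<in> K2q_V q" "x \<notin> ?S" using psubset_imp_ex_mem by blast
  obtain y where "psd_forcing_set (K2q_V q) (K2q_E q) {x, y}"
    using ex_psd_forcing_set_K2q_pair[OF _ x(1)] two_le_q by auto
  then have P: "{x, y} \<subseteq> K2q_V q" "psd_forcing_set (K2q_V q) (K2q_E q) {x, y}"
    unfolding psd_forcing_set_def by simp_all
  let ?T = "{x, y} \<union> (K2q_V q - ?S)"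
  have "?T \<subseteq> K2q_V q" using P(1) by blast
  then have "?T \<in> psd_tar_V (K2q_V q) (K2q_E q)"
    using psd_forcing_set_superset[OF P(2) Un_upper1] unfolding psd_tar_V_def by simp
  then obtain T where T: "T \<in> psd_tar_V V E" "\<phi> T = ?T" using ex_preimage by blast
  have "card (?S \<inter> {x, y}) \<le> card {y}"
    using x by (intro card_mono) auto
  moreover have "card (sym_diff ?S ?T) = card (K2q_V q) - card (?S \<inter> {x, y})"
    unfolding sym_diff_Un_Diff[OF psd_tar_V_subset[OF S] P(1)]
    by (rule card_Diff_subset) (use P(1) finite_V' in \<open>auto intro: finite_subset\<close>)
  ultimately have "q + 1 \<le> card (sym_diff ?S ?T)"
    by (simp add: K2q_V_def)
  also have "\<dots> = card (sym_diff V T)"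
    using card_sym_diff[OF psd_tar_V_top T(1)] T(2) by simp
  also have "\<dots> = card V - card T"
    using card_sym_diff_of_subset[OF finite_V psd_tar_V_subset[OF T(1)]] by simp
  also have "\<dots> \<le> q" using card_V two_le_card_forcing[OF T(1)] by simp
  finally show False by simp
qed

lemma card_image: "S \<in> psd_tar_V V E \<Longrightarrow> card (\<phi> S) = card S"
proof -
  assume S: "S \<in> psd_tar_V V E"
  have "card (sym_diff V S) = card (sym_diff (K2q_V q) (\<phi> S))"
    using card_sym_diff[OF psd_tar_V_top S] image_top by simp
  moreover have "card S \<le> card V" "card (\<phi> S) \<le> card (K2q_V q)"
    using psd_tar_V_subset[OF S] psd_tar_V_subset[OF mem_psd_tar_V[OF S]] finite_V finite_V'
    by (simp_all add: card_mono)
  ultimately show ?thesis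
    using card_sym_diff_of_subset[OF finite_V psd_tar_V_subset[OF S]]
      card_sym_diff_of_subset[OF finite_V' psd_tar_V_subset[OF mem_psd_tar_V[OF S]]]
      card_V by (simp add: K2q_V_def)
qed

text \<open>Being size-preserving and distance-preserving, \<phi> maps a proper subset of the preimage
  S of the large part to a proper subset of the large part, which is not forcing.\<close>
lemma not_mem_psd_tar_V_if_psubset_preimage:
  assumes S: "S \<in> psd_tar_V V E" "\<phi> S = {2..<q+2}" and "T \<subset> S"
  shows "T \<notin> psd_tar_V V E"
proof
  assume T: "T \<in> psd_tar_V V E"
  have finite_S: "finite S" using psd_tar_V_finite[OF finite_V S(1)] .
  have card_S: "card S = q" using card_image[OF S(1)] S(2) by simp
  have "card T < card S" using psubset_card_mono[OF finite_S \<open>T \<subset> S\<close>] .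
  have TK: "\<phi> T \<in> psd_tar_V (K2q_V q) (K2q_E q)" by (rule mem_psd_tar_V[OF T])
  have "card (sym_diff (\<phi> T) {2..<q+2}) = card S - card T"
    using card_sym_diff[OF T S(1)] S(2) card_sym_diff_of_subset[OF finite_S] \<open>T \<subset> S\<close>
    by (simp add: Un_commute)
  then have "\<phi> T \<subseteq> {2..<q+2}"
    using card_image[OF T] card_S psd_tar_V_finite[OF finite_V' TK] \<open>card T < card S\<close>
    by (intro subset_if_card_sym_diff) simp_all
  moreover have "\<phi> T \<noteq> {2..<q+2}"
    using inj_on_eq_iff[OF bij_betw_imp_inj_on[OF bij] T S(1)] S(2) \<open>T \<subset> S\<close> by blast
  ultimately show False
    using not_psd_forcing_set_K2q_psubset TK unfolding psd_tar_V_def by blast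
qed

text \<open>The family of forcing sets of G contains no proper subset of the preimage S of the large
  part and no set with fewer than two elements; it has as many members as that of K_{2,q}.\<close>
lemma psd_tar_V_eq_K2q_forcing_family:
  obtains a a' S where "a \<noteq> a'" "a \<notin> S" "a' \<notin> S" "V = insert a (insert a' S)" "card S = q"
    "psd_tar_V V E = K2q_forcing_family a a' S"
proof -
  have "{2..<q+2} \<in> psd_tar_V (K2q_V q) (K2q_E q)"
    using psd_forcing_set_K2q_large_part two_le_q unfolding psd_tar_V_def by simp
  then obtain S where S: "S \<in> psd_tar_V V E" "\<phi> S = {2..<q+2}" using ex_preimage by blast
  have card_S: "card S = q" using card_image[OF S(1)] S(2) by simp
  have SV: "S \<subseteq> V" and finite_S: "finite S"
    using psd_tar_V_subset[OF S(1)] psd_tar_V_finite[OF finite_V S(1)] by simp_all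
  then have "card (V - S) = 2" using card_V card_S by (simp add: card_Diff_subset)
  then obtain a a' where aa': "V - S = {a, a'}" "a \<noteq> a'" by (meson card_2_iff)
  then have a: "a \<notin> S" "a' \<notin> S" and V: "V = insert a (insert a' S)" using SV by blast+
  have "psd_tar_V V E \<subseteq> K2q_forcing_family a a' S"
  proof
    fix T assume T: "T \<in> psd_tar_V V E"
    then have "\<not> T \<subset> S" using not_mem_psd_tar_V_if_psubset_preimage[OF S] by blast
    then show "T \<in> K2q_forcing_family a a' S"
      using mem_K2q_forcing_family_iff[OF finite_S] card_S two_le_q two_le_card_forcing[OF T]
        psd_tar_V_subset[OF T] V by auto
  qed
  moreover have "card (psd_tar_V V E) = card (K2q_forcing_family a a' S)"
    using bij_betw_same_card[OF bij] psd_tar_V_K2q[OF two_le_q]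
      card_K2q_forcing_family[of "{2..<q+2}" 0 1] card_K2q_forcing_family[OF finite_S aa'(2) a]
      card_S by simp
  moreover have "finite (K2q_forcing_family a a' S)"
    unfolding K2q_forcing_family_def using finite_S by simp
  ultimately have "psd_tar_V V E = K2q_forcing_family a a' S"
    by (rule card_subset_eq[rotated])
  then show ?thesis using that aa'(2) a V card_S by blast
qed

end

theorem proposition4p6:
  fixes q :: nat and V :: "'a set" and E :: "'a \<Rightarrow> 'a \<Rightarrow> bool"
  assumes "q \<ge> 2"
    and "simple_graph V E"
    and "no_isolated V E"
    and "graph_iso (psd_tar_V V E) (psd_tar_E V E) (psd_tar_V (K2q_V q) (K2q_E q)) (psd_tar_E (K2q_V q) (K2q_E q))"
  shows "graph_iso V E (K2q_V q) (K2q_E q)"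
proof -
  obtain \<phi> where "bij_betw \<phi> (psd_tar_V V E) (psd_tar_V (K2q_V q) (K2q_E q))"
    "\<forall>S\<in>psd_tar_V V E. \<forall>T\<in>psd_tar_V V E.
      psd_tar_E V E S T \<longleftrightarrow> psd_tar_E (K2q_V q) (K2q_E q) (\<phi> S) (\<phi> T)"
    using assms(4) unfolding graph_iso_def by blast
  then interpret tar: K2q_tar_iso V E q \<phi>
    using assms(1-3) by unfold_locales (simp_all add: simple_graph_def K2q_V_def)
  obtain a a' S where "a \<noteq> a'" "a \<notin> S" "a' \<notin> S" "V = insert a (insert a' S)" "card S = q"
    "psd_tar_V V E = K2q_forcing_family a a' S"
    by (rule tar.psd_tar_V_eq_K2q_forcing_family)
  then interpret G: K2q_forcing_graph V E a a' S
    using assms(1-3) by unfold_locales simp_all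
  show ?thesis
    using G.graph_iso_K2q \<open>card S = q\<close> by simp
qed

end
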